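(* Let $L$ be a finite-dimensional pure, nonnilpotent, solvable Lie algebra over $\mathbb{C}$ of breadth $2$ such that $\dim[L,L]=3$ and $\dim\big(L/Z(L)\big)=3$. Then $[L,L]$ is isomorphic to the $3$-dimensional Heisenberg Lie algebra (i.e. it has a basis $\{x,y,z\}$ with $[x,y]=z$ and $[x,z]=[y,z]=0$).
   Context: For $x\in L$, $b(x)=\mathrm{rank}(\mathrm{ad}_x)$ and the breadth of $L$ is $b(L)=\max\{b(x)\mid x\in L\}$. $L$ is pure if it has no abelian ideal as a direct summand; equivalently $Z(L)\subseteq[L,L]$, where $Z(L)$ is the center. *)

theory Defs
  imports Complex_Main
begin

text \<open>The whole type is L.\<close>

definition lie_algebra :: "(complex \<Rightarrow> 'v::ab_group_add \<Rightarrow> 'v) \<Rightarrow> ('v \<Rightarrow> 'v \<Rightarrow> 'v) \<Rightarrow> bool" where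
  "lie_algebra sc br \<longleftrightarrow>
     vector_space sc \<and>
     (\<forall>x y z. br (x + y) z = br x z + br y z) \<and>
     (\<forall>x y z. br x (y + z) = br x y + br x z) \<and>
     (\<forall>c x y. br (sc c x) y = sc c (br x y)) \<and>
     (\<forall>c x y. br x (sc c y) = sc c (br x y)) \<and>
     (\<forall>x. br x x = 0) \<and>
     (\<forall>x y z. br x (br y z) + br y (br z x) + br z (br x y) = 0)"

definition finite_dim_lie :: "(complex \<Rightarrow> 'v::ab_group_add \<Rightarrow> 'v) \<Rightarrow> bool" where
  "finite_dim_lie sc \<longleftrightarrow> (\<exists>B. finite B \<and> module.span sc B = UNIV)"

definition lie_bracket_set ::
  "(complex \<Rightarrow> 'v::ab_group_add \<Rightarrow> 'v) \<Rightarrow> ('v \<Rightarrow> 'v \<Rightarrow> 'v) \<Rightarrow> 'v set \<Rightarrow> 'v set \<Rightarrow> 'v set" where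
  "lie_bracket_set sc br S T = module.span sc {br x y | x y. x \<in> S \<and> y \<in> T}"

definition derived_alg :: "(complex \<Rightarrow> 'v::ab_group_add \<Rightarrow> 'v) \<Rightarrow> ('v \<Rightarrow> 'v \<Rightarrow> 'v) \<Rightarrow> 'v set" where
  "derived_alg sc br = lie_bracket_set sc br UNIV UNIV"

definition lie_center :: "('v::ab_group_add \<Rightarrow> 'v \<Rightarrow> 'v) \<Rightarrow> 'v set" where
  "lie_center br = {z. \<forall>x. br z x = 0}"

fun derived_series :: "(complex \<Rightarrow> 'v::ab_group_add \<Rightarrow> 'v) \<Rightarrow> ('v \<Rightarrow> 'v \<Rightarrow> 'v) \<Rightarrow> nat \<Rightarrow> 'v set" where
  "derived_series sc br 0 = UNIV"
| "derived_series sc br (Suc n) = lie_bracket_set sc br (derived_series sc br n) (derived_series sc br n)"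

fun lower_central_series :: "(complex \<Rightarrow> 'v::ab_group_add \<Rightarrow> 'v) \<Rightarrow> ('v \<Rightarrow> 'v \<Rightarrow> 'v) \<Rightarrow> nat \<Rightarrow> 'v set" where
  "lower_central_series sc br 0 = UNIV"
| "lower_central_series sc br (Suc n) = lie_bracket_set sc br UNIV (lower_central_series sc br n)"

definition solvable_lie :: "(complex \<Rightarrow> 'v::ab_group_add \<Rightarrow> 'v) \<Rightarrow> ('v \<Rightarrow> 'v \<Rightarrow> 'v) \<Rightarrow> bool" where
  "solvable_lie sc br \<longleftrightarrow> (\<exists>n. derived_series sc br n = {0})"

definition nilpotent_lie :: "(complex \<Rightarrow> 'v::ab_group_add \<Rightarrow> 'v) \<Rightarrow> ('v \<Rightarrow> 'v \<Rightarrow> 'v) \<Rightarrow> bool" where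
  "nilpotent_lie sc br \<longleftrightarrow> (\<exists>n. lower_central_series sc br n = {0})"

text \<open>Pure: equivalently, the centre is contained in the derived algebra.\<close>
definition pure_lie :: "(complex \<Rightarrow> 'v::ab_group_add \<Rightarrow> 'v) \<Rightarrow> ('v \<Rightarrow> 'v \<Rightarrow> 'v) \<Rightarrow> bool" where
  "pure_lie sc br \<longleftrightarrow> lie_center br \<subseteq> derived_alg sc br"

definition elem_breadth :: "(complex \<Rightarrow> 'v::ab_group_add \<Rightarrow> 'v) \<Rightarrow> ('v \<Rightarrow> 'v \<Rightarrow> 'v) \<Rightarrow> 'v \<Rightarrow> nat" where
  "elem_breadth sc br x = vector_space.dim sc (range (br x))"

definition lie_breadth :: "(complex \<Rightarrow> 'v::ab_group_add \<Rightarrow> 'v) \<Rightarrow> ('v \<Rightarrow> 'v \<Rightarrow> 'v) \<Rightarrow> nat" where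
  "lie_breadth sc br = Max (range (elem_breadth sc br))"

end

theory Submission
  imports Defs
begin

text \<open>
  Write Z for the centre and D for the derived algebra; purity means Z \<subseteq> D. If e1, e2, e3
  span L modulo Z, the three brackets of the e_i span D, so dim D = 3 makes them a basis of D.
  The Jacobi identity for e1, e2, e3, read modulo Z, then shows that br e1 e2 is central as soon
  as D lies in Z + span {e1, e2}. Choose the e_i adapted to Z \<subseteq> D and compare dim Z with 3:
  dim Z = 0 makes L perfect, against solvability; dim Z = 3 and dim Z = 2 give [L, D] \<subseteq> Z,
  against non-nilpotency; for dim Z = 1 we get D = Z + span {u, v} with u, v \<in> D, and
  w = br u v is a non-zero central vector, so Z = span {w} and u, v, w is a Heisenberg basis of D.
\<close>

context module
begin

lemma independent3_lincomb_eq_0: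
  assumes "independent {p, q, r}" "card {p, q, r} = 3"
    and "a *s p + b *s q + c *s r = 0"
  shows "a = 0 \<and> b = 0 \<and> c = 0"
proof -
  have distinct: "p \<noteq> q" "p \<noteq> r" "q \<noteq> r"
    using assms(2) by (auto simp: card_insert_if split: if_splits)
  define f where "f v = (if v = p then a else if v = q then b else c)" for v
  have "(\<Sum>v\<in>{p, q, r}. f v *s v) = 0"
    using distinct assms(3) by (simp add: f_def add.assoc)
  then have "\<forall>v\<in>{p, q, r}. f v = 0"
    using assms(1)[unfolded independent_explicit_module, rule_format, of "{p, q, r}" f] by blast
  then show ?thesis
    using distinct by (simp add: f_def)
qed

end

context vector_space
begin

lemma in_span_insert_subspace:
  assumes "subspace S" "y \<in> span (insert a S)"
  obtains c where "y - c *s a \<in> S"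
  using assms span_breakdown_eq span_eq_iff by blast

end

context finite_dimensional_vector_space
begin

lemma spanning_complement_exists:
  assumes "S \<subseteq> T"
  obtains F where "F \<subseteq> T" "card F = dim T - dim S" "T \<subseteq> span (S \<union> F)"
proof -
  obtain BS where BS: "BS \<subseteq> S" "independent BS" "S \<subseteq> span BS" "card BS = dim S"
    by (rule basis_exists)
  obtain BT where BT: "BS \<subseteq> BT" "BT \<subseteq> T" "independent BT" "T \<subseteq> span BT"
    using maximal_independent_subset_extend[of BS T] BS(1,2) assms by blast
  have "finite BT" "card BT = dim T"
    using BT(3) finiteI_independent basis_card_eq_dim[OF BT(2,4,3)] by blast+
  show ?thesis
  proof (rule that[of "BT - BS"])
    show "BT - BS \<subseteq> T"
      using BT(2) by blast
    show "card (BT - BS) = dim T - dim S"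
      using BS(4) BT(1) \<open>finite BT\<close> \<open>card BT = dim T\<close> by (simp add: card_Diff_subset finite_subset)
    have "span BT \<subseteq> span (S \<union> (BT - BS))"
      using BS(1) by (intro span_mono) blast
    with BT(4) show "T \<subseteq> span (S \<union> (BT - BS))"
      by blast
  qed
qed

lemma independent_if_card_le_dim_span:
  assumes "finite B" "card B \<le> dim (span B)"
  shows "independent B" "card B = dim (span B)"
proof -
  show "independent B"
    using card_le_dim_spanning[OF span_superset order_refl] assms .
  then show "card B = dim (span B)"
    by (rule dim_span_eq_card_independent[symmetric])
qed

end

locale complex_lie_algebra = vector_space scale
  for scale :: "complex \<Rightarrow> 'v::ab_group_add \<Rightarrow> 'v" (infixr \<open>*s\<close> 75) +
  fixes br :: "'v \<Rightarrow> 'v \<Rightarrow> 'v"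
  assumes br_add_left [simp]: "br (x + y) z = br x z + br y z"
    and br_add_right [simp]: "br x (y + z) = br x y + br x z"
    and br_scale_left [simp]: "br (c *s x) y = c *s br x y"
    and br_scale_right [simp]: "br x (c *s y) = c *s br x y"
    and br_self [simp]: "br x x = 0"
    and jacobi: "br x (br y z) + br y (br z x) + br z (br x y) = 0"
begin

lemma br_zero_left [simp]: "br 0 y = 0"
  using br_add_left[of 0 0 y] by simp

lemma br_zero_right [simp]: "br x 0 = 0"
  using br_add_right[of x 0 0] by simp

lemma br_antisym: "br x y = - br y x"
proof -
  have "br x y + br y x = br (x + y) (x + y)"
    unfolding br_add_left br_add_right by simp
  also have "\<dots> = 0"
    by simp
  finally show ?thesis
    by (simp add: eq_neg_iff_add_eq_0)
qed

lemma subspace_lie_center: "subspace (lie_center br)"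
  by (rule subspaceI) (simp_all add: lie_center_def)

lemma br_center_left [simp]: "z \<in> lie_center br \<Longrightarrow> br z x = 0"
  by (simp add: lie_center_def)

lemma br_center_right [simp]: "z \<in> lie_center br \<Longrightarrow> br x z = 0"
  using br_antisym[of x z] by simp

lemma derived_alg_eq_span: "derived_alg scale br = span {br x y | x y. True}"
  by (simp add: derived_alg_def lie_bracket_set_def)

lemma subspace_derived_alg: "subspace (derived_alg scale br)"
  by (simp add: derived_alg_eq_span)

lemma br_in_derived_alg [simp]: "br x y \<in> derived_alg scale br"
  unfolding derived_alg_eq_span by (rule span_base) blast

lemma br_in_subspace_span:
  assumes "subspace V" "x \<in> span S" "y \<in> span T"
    and "\<And>s t. s \<in> S \<Longrightarrow> t \<in> T \<Longrightarrow> br s t \<in> V"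
  shows "br x y \<in> V"
proof -
  have left: "br s y \<in> V" if "s \<in> S" for s
    using assms(3) by (rule span_induct) (use assms(1,4) that in \<open>auto simp: subspace_def\<close>)
  show ?thesis
    using assms(2) by (rule span_induct) (use assms(1) left in \<open>auto simp: subspace_def\<close>)
qed

lemma derived_alg_eq_span_brackets:
  assumes "UNIV \<subseteq> span (lie_center br \<union> {e1, e2, e3})"
  shows "derived_alg scale br = span {br e1 e2, br e1 e3, br e2 e3}"
proof
  let ?T = "{br e1 e2, br e1 e3, br e2 e3}"
  show "span ?T \<subseteq> derived_alg scale br"
    using subspace_derived_alg by (intro span_minimal) auto
  have "br e1 e2 \<in> span ?T" "br e1 e3 \<in> span ?T" "br e2 e3 \<in> span ?T"
    by (auto intro: span_base)
  then have "br s t \<in> span ?T" if "s \<in> {e1, e2, e3}" "t \<in> {e1, e2, e3}" for s t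
    using that br_antisym[of e2 e1] br_antisym[of e3 e1] br_antisym[of e3 e2]
    by (auto simp: span_zero span_neg)
  then have "br x y \<in> span ?T" for x y
    using assms by (intro br_in_subspace_span[of _ x "lie_center br \<union> {e1, e2, e3}" y
          "lie_center br \<union> {e1, e2, e3}"]) (auto simp: span_zero)
  then show "derived_alg scale br \<subseteq> span ?T"
    unfolding derived_alg_eq_span by (intro span_minimal) auto
qed

lemma nilpotent_if_br_derived_alg_in_center:
  assumes "\<And>x d. d \<in> derived_alg scale br \<Longrightarrow> br x d \<in> lie_center br"
  shows "nilpotent_lie scale br"
proof -
  have "lower_central_series scale br 2 = lie_bracket_set scale br UNIV (derived_alg scale br)"
    by (simp add: numeral_2_eq_2 derived_alg_def)
  also have "\<dots> \<subseteq> lie_center br"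
    unfolding lie_bracket_set_def by (rule span_minimal) (use assms subspace_lie_center in auto)
  finally have "lower_central_series scale br 2 \<subseteq> lie_center br" .
  then have "{br x y |x y. x \<in> UNIV \<and> y \<in> lower_central_series scale br 2} \<subseteq> {0}"
    using br_center_right by blast
  then have "lie_bracket_set scale br UNIV (lower_central_series scale br 2) \<subseteq> {0}"
    unfolding lie_bracket_set_def using span_mono[of _ "{0}"] by simp
  then have "lie_bracket_set scale br UNIV (lower_central_series scale br 2) = {0}"
    unfolding lie_bracket_set_def using span_zero by blast
  then have "lower_central_series scale br 3 = {0}"
    by (simp add: numeral_3_eq_3 numeral_2_eq_2)
  then show ?thesis
    unfolding nilpotent_lie_def by blast
qed

lemma solvable_perfect_trivial:
  assumes "solvable_lie scale br" "derived_alg scale br = UNIV"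
  shows "(UNIV :: 'v set) = {0}"
proof -
  have "derived_series scale br n = UNIV" for n
    by (induction n) (use assms(2) in \<open>simp_all add: derived_alg_def\<close>)
  then show ?thesis
    using assms(1) unfolding solvable_lie_def by simp
qed

end

locale fd_lie_algebra = complex_lie_algebra scale br + finite_dimensional_vector_space scale Basis
  for scale :: "complex \<Rightarrow> 'v::ab_group_add \<Rightarrow> 'v" (infixr \<open>*s\<close> 75)
    and br :: "'v \<Rightarrow> 'v \<Rightarrow> 'v"
    and Basis :: "'v set"
begin

lemma brackets_independent:
  assumes "UNIV \<subseteq> span (lie_center br \<union> {e1, e2, e3})"
    and "dim (derived_alg scale br) = 3"
  shows "independent {br e1 e2, br e1 e3, br e2 e3}"
    and "card {br e1 e2, br e1 e3, br e2 e3} = 3"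
proof -
  let ?T = "{br e1 e2, br e1 e3, br e2 e3}"
  have "card ?T \<le> dim (span ?T)"
    using assms derived_alg_eq_span_brackets by (simp add: card_insert_le_m1)
  then show "independent ?T" "card ?T = 3"
    using independent_if_card_le_dim_span[of ?T] assms derived_alg_eq_span_brackets by auto
qed

text \<open>Modulo Z the Jacobi identity for e3, e1, e2 is a linear relation between the three
  independent brackets whose coefficients include the e1- and e2-components of br e1 e2.\<close>
lemma br_in_center_if_derived_alg_in_span:
  assumes spanning: "UNIV \<subseteq> span (lie_center br \<union> {e1, e2, e3})"
    and dim_derived: "dim (derived_alg scale br) = 3"
    and derived: "derived_alg scale br \<subseteq> span (insert e1 (insert e2 (lie_center br)))"
  shows "br e1 e2 \<in> lie_center br"
proof -
  have decompose: "\<exists>z c d. z \<in> lie_center br \<and> br x y = z + c *s e1 + d *s e2" for x y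
  proof -
    have "br x y \<in> span (insert e1 (insert e2 (lie_center br)))"
      using derived by auto
    then obtain c where "br x y - c *s e1 \<in> span (insert e2 (lie_center br))"
      by (auto simp: span_breakdown_eq)
    then obtain d where "br x y - c *s e1 - d *s e2 \<in> lie_center br"
      using in_span_insert_subspace[OF subspace_lie_center] by blast
    then show ?thesis
      by (intro exI[of _ "br x y - c *s e1 - d *s e2"] exI[of _ c] exI[of _ d]) simp
  qed
  obtain z0 \<beta> \<gamma> where z0: "z0 \<in> lie_center br" "br e1 e2 = z0 + \<beta> *s e1 + \<gamma> *s e2"
    using decompose by blast
  obtain z1 c1 d1 where z1: "z1 \<in> lie_center br" "br e2 e3 = z1 + c1 *s e1 + d1 *s e2"
    using decompose by blast
  obtain z2 c2 d2 where z2: "z2 \<in> lie_center br" "br e3 e1 = z2 + c2 *s e1 + d2 *s e2"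
    using decompose by blast
  have jacobi_1: "br e3 (br e1 e2) = (- \<beta>) *s br e1 e3 + (- \<gamma>) *s br e2 e3"
    using z0 br_antisym[of e3 e1] br_antisym[of e3 e2] by simp
  have jacobi_2: "br e1 (br e2 e3) = d1 *s br e1 e2"
    using z1 by simp
  have jacobi_3: "br e2 (br e3 e1) = (- c2) *s br e1 e2"
    using z2 br_antisym[of e2 e1] by simp
  have "0 = br e3 (br e1 e2) + br e1 (br e2 e3) + br e2 (br e3 e1)"
    by (rule jacobi[symmetric])
  also have "\<dots> = (d1 - c2) *s br e1 e2 + (- \<beta>) *s br e1 e3 + (- \<gamma>) *s br e2 e3"
    unfolding jacobi_1 jacobi_2 jacobi_3 by (simp add: algebra_simps)
  finally have "(d1 - c2) *s br e1 e2 + (- \<beta>) *s br e1 e3 + (- \<gamma>) *s br e2 e3 = 0"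
    by (rule sym)
  then have "d1 - c2 = 0 \<and> - \<beta> = 0 \<and> - \<gamma> = 0"
    by (rule independent3_lincomb_eq_0[OF brackets_independent[OF spanning dim_derived]])
  then have "\<beta> = 0" "\<gamma> = 0"
    by simp_all
  then show ?thesis
    using z0 by simp
qed

lemma adapted_spanning_sets:
  assumes "lie_center br \<subseteq> derived_alg scale br"
    and "dim (derived_alg scale br) = 3"
    and "dim (UNIV :: 'v set) = dim (lie_center br) + 3"
  obtains F G where "F \<subseteq> derived_alg scale br" "card F = 3 - dim (lie_center br)"
    "card G = dim (lie_center br)"
    "derived_alg scale br \<subseteq> span (lie_center br \<union> F)"
    "UNIV \<subseteq> span (lie_center br \<union> F \<union> G)"
proof -
  obtain F where F: "F \<subseteq> derived_alg scale br" "card F = 3 - dim (lie_center br)"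
    "derived_alg scale br \<subseteq> span (lie_center br \<union> F)"
    using spanning_complement_exists[OF assms(1)] assms(2) by metis
  obtain G where G: "card G = dim (lie_center br)"
    "UNIV \<subseteq> span (derived_alg scale br \<union> G)"
    using spanning_complement_exists[of "derived_alg scale br" UNIV] assms(2,3) by auto
  have "derived_alg scale br \<union> G \<subseteq> span (lie_center br \<union> F \<union> G)"
    using F(3) span_mono[of "lie_center br \<union> F" "lie_center br \<union> F \<union> G"] span_superset
    by blast
  then have "span (derived_alg scale br \<union> G) \<subseteq> span (lie_center br \<union> F \<union> G)"
    by (simp add: span_minimal)
  with F G show ?thesis
    using that by blast
qed

lemma nilpotent_if_dim_center_3:
  assumes "lie_center br \<subseteq> derived_alg scale br"
    and "dim (derived_alg scale br) = 3" "dim (lie_center br) = 3"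
  shows "nilpotent_lie scale br"
proof -
  have "lie_center br = derived_alg scale br"
    by (rule subspace_dim_equal) (use assms subspace_lie_center subspace_derived_alg in auto)
  then show ?thesis
    by (intro nilpotent_if_br_derived_alg_in_center) (simp add: subspace_0[OF subspace_derived_alg])
qed

lemma nilpotent_if_derived_alg_in_span_insert:
  assumes spanning: "UNIV \<subseteq> span (lie_center br \<union> {u, a, b})"
    and dim_derived: "dim (derived_alg scale br) = 3"
    and derived: "derived_alg scale br \<subseteq> span (insert u (lie_center br))"
  shows "nilpotent_lie scale br"
proof -
  have "span (insert u (lie_center br)) \<subseteq> span (insert u (insert e (lie_center br)))" for e
    by (rule span_mono) blast
  with derived have derived_e: "derived_alg scale br \<subseteq> span (insert u (insert e (lie_center br)))"
    for e by blast
  have "br u a \<in> lie_center br"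
    using spanning dim_derived derived_e by (rule br_in_center_if_derived_alg_in_span)
  moreover have "br u b \<in> lie_center br"
    using spanning dim_derived derived_e
    by (intro br_in_center_if_derived_alg_in_span[of u b a]) (simp_all add: insert_commute)
  ultimately have u_central: "br u x \<in> lie_center br" for x
    using spanning subspace_lie_center
    by (intro br_in_subspace_span[of _ u "{u}" x "lie_center br \<union> {u, a, b}"])
      (auto simp: span_base subspace_def)
  show ?thesis
  proof (rule nilpotent_if_br_derived_alg_in_center)
    fix x d
    assume "d \<in> derived_alg scale br"
    then obtain c where "d - c *s u \<in> lie_center br"
      using derived in_span_insert_subspace[OF subspace_lie_center] by blast
    then have "br x d = c *s br x u"
      by (metis br_add_right br_scale_right br_center_right diff_add_cancel add_0_left)
    also have "\<dots> = (- c) *s br u x"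
      using br_antisym[of x u] by simp
    finally show "br x d \<in> lie_center br"
      using subspace_scale[OF subspace_lie_center u_central] by metis
  qed
qed

lemma heisenberg_basis_if_derived_alg_in_span_insert2:
  assumes spanning: "UNIV \<subseteq> span (lie_center br \<union> {u, v, a})"
    and dim_derived: "dim (derived_alg scale br) = 3"
    and dim_center: "dim (lie_center br) = 1"
    and uv: "u \<in> derived_alg scale br" "v \<in> derived_alg scale br"
    and derived: "derived_alg scale br \<subseteq> span (insert u (insert v (lie_center br)))"
  shows "span {u, v, br u v} = derived_alg scale br" "independent {u, v, br u v}"
    "card {u, v, br u v} = 3" "br u v \<in> lie_center br"
proof -
  define w where "w = br u v"
  have w_central: "w \<in> lie_center br"
    unfolding w_def using spanning dim_derived derived by (rule br_in_center_if_derived_alg_in_span)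
  have "w \<noteq> 0"
    using brackets_independent(1)[OF spanning dim_derived] dependent_zero w_def by auto
  then have "lie_center br \<subseteq> span {w}"
    using w_central dim_center by (intro card_ge_dim_independent) auto
  then have "insert u (insert v (lie_center br)) \<subseteq> span {u, v, w}"
    using span_mono[of "{w}" "{u, v, w}"] by (auto intro: span_base)
  then have "derived_alg scale br \<subseteq> span {u, v, w}"
    using derived span_minimal[OF _ subspace_span] by blast
  moreover have "span {u, v, w} \<subseteq> derived_alg scale br"
    using uv subspace_derived_alg by (intro span_minimal) (auto simp: w_def)
  ultimately have span_eq: "span {u, v, w} = derived_alg scale br"
    by blast
  then have "card {u, v, w} \<le> dim (span {u, v, w})"
    using dim_derived by (simp add: card_insert_le_m1)
  then have "independent {u, v, w}" "card {u, v, w} = 3"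
    using independent_if_card_le_dim_span[of "{u, v, w}"] span_eq dim_derived by auto
  with span_eq w_central show "span {u, v, br u v} = derived_alg scale br"
    "independent {u, v, br u v}" "card {u, v, br u v} = 3" "br u v \<in> lie_center br"
    by (simp_all add: w_def)
qed

lemma nilpotent_if_dim_center_2:
  assumes "lie_center br \<subseteq> derived_alg scale br"
    and "dim (derived_alg scale br) = 3"
    and "dim (UNIV :: 'v set) = dim (lie_center br) + 3" "dim (lie_center br) = 2"
  shows "nilpotent_lie scale br"
proof -
  obtain F G where "card F = 3 - dim (lie_center br)" "card G = dim (lie_center br)"
    and derived_F: "derived_alg scale br \<subseteq> span (lie_center br \<union> F)"
    and spanning_FG: "UNIV \<subseteq> span (lie_center br \<union> F \<union> G)"
    using adapted_spanning_sets[OF assms(1-3)] by metis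
  with assms(4) obtain u a b where "F = {u}" "G = {a, b}"
    by (auto simp: card_1_singleton_iff card_2_iff)
  then have "lie_center br \<union> F = insert u (lie_center br)"
    and "lie_center br \<union> F \<union> G = lie_center br \<union> {u, a, b}"
    by blast+
  with derived_F spanning_FG show ?thesis
    using nilpotent_if_derived_alg_in_span_insert assms(2) by metis
qed

lemma heisenberg_if_dim_center_1:
  assumes "lie_center br \<subseteq> derived_alg scale br"
    and "dim (derived_alg scale br) = 3"
    and "dim (UNIV :: 'v set) = dim (lie_center br) + 3" "dim (lie_center br) = 1"
  shows "\<exists>x y z. x \<in> derived_alg scale br \<and> y \<in> derived_alg scale br \<and> z \<in> derived_alg scale br \<and>
           card {x, y, z} = 3 \<and> \<not> dependent {x, y, z} \<and>
           span {x, y, z} = derived_alg scale br \<and>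
           br x y = z \<and> br x z = 0 \<and> br y z = 0"
proof -
  obtain F G where F: "F \<subseteq> derived_alg scale br" "card F = 3 - dim (lie_center br)"
    and G: "card G = dim (lie_center br)"
    and derived_F: "derived_alg scale br \<subseteq> span (lie_center br \<union> F)"
    and spanning_FG: "UNIV \<subseteq> span (lie_center br \<union> F \<union> G)"
    by (rule adapted_spanning_sets[OF assms(1-3)])
  with assms(4) obtain u v a where "F = {u, v}" "G = {a}"
    by (auto simp: card_1_singleton_iff card_2_iff)
  then have uv: "u \<in> derived_alg scale br" "v \<in> derived_alg scale br"
    and "lie_center br \<union> F = insert u (insert v (lie_center br))"
    and "lie_center br \<union> F \<union> G = lie_center br \<union> {u, v, a}"
    using F(1) by blast+
  with derived_F spanning_FG
  have "span {u, v, br u v} = derived_alg scale br" "independent {u, v, br u v}"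
    "card {u, v, br u v} = 3" "br u v \<in> lie_center br"
    using heisenberg_basis_if_derived_alg_in_span_insert2[of u v a] assms(2,4) by metis+
  with uv show ?thesis
    by (intro exI[of _ u] exI[of _ v] exI[of _ "br u v"]) simp
qed

lemma dim_center_pos_if_solvable:
  assumes "solvable_lie scale br"
    and "dim (derived_alg scale br) = 3"
    and "dim (UNIV :: 'v set) = dim (lie_center br) + 3"
  shows "dim (lie_center br) \<noteq> 0"
proof
  assume "dim (lie_center br) = 0"
  then have "derived_alg scale br = UNIV"
    using assms(2,3) subspace_derived_alg by (simp add: subspace_dim_equal)
  then have "(UNIV :: 'v set) = {0}"
    by (rule solvable_perfect_trivial[OF assms(1)])
  then have "dim (UNIV :: 'v set) = 0"
    unfolding dim_eq_0 by simp
  with assms(3) show False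
    by simp
qed

end

lemma fd_lie_algebra_exists:
  assumes "lie_algebra sc br" "finite_dim_lie sc"
  obtains B where "fd_lie_algebra sc br B"
proof -
  have vs: "vector_space sc"
    using assms(1) unfolding lie_algebra_def by blast
  interpret vector_space sc
    by (rule vs)
  obtain B0 where "finite B0" "span B0 = UNIV"
    using assms(2) unfolding finite_dim_lie_def by blast
  moreover obtain B where "B \<subseteq> B0" "independent B" "B0 \<subseteq> span B"
    using maximal_independent_subset[of B0] by blast
  ultimately have "finite B" "independent B" "span B = UNIV"
    using finite_subset span_minimal[of B0 "span B"] by auto
  with vs assms(1) have "fd_lie_algebra sc br B"
    by (intro fd_lie_algebra.intro complex_lie_algebra.intro complex_lie_algebra_axioms.intro
        finite_dimensional_vector_space.intro finite_dimensional_vector_space_axioms.intro)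
      (simp_all add: lie_algebra_def)
  then show ?thesis
    by (rule that)
qed

theorem lemma3p1:
  fixes sc :: "complex \<Rightarrow> 'v::ab_group_add \<Rightarrow> 'v"
    and br :: "'v \<Rightarrow> 'v \<Rightarrow> 'v"
  assumes "lie_algebra sc br"
    and "finite_dim_lie sc"
    and "pure_lie sc br"
    and "\<not> nilpotent_lie sc br"
    and "solvable_lie sc br"
    and "lie_breadth sc br = 2"
    and "vector_space.dim sc (derived_alg sc br) = 3"
    and "vector_space.dim sc (UNIV :: 'v set) = vector_space.dim sc (lie_center br) + 3"
  shows "\<exists>x y z. x \<in> derived_alg sc br \<and> y \<in> derived_alg sc br \<and> z \<in> derived_alg sc br \<and>
           card {x, y, z} = 3 \<and> \<not> module.dependent sc {x, y, z} \<and>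
           module.span sc {x, y, z} = derived_alg sc br \<and>
           br x y = z \<and> br x z = 0 \<and> br y z = 0"
proof -
  obtain B where "fd_lie_algebra sc br B"
    using assms(1,2) by (rule fd_lie_algebra_exists)
  then interpret fd_lie_algebra sc br B .
  have pure: "lie_center br \<subseteq> derived_alg sc br"
    using assms(3) unfolding pure_lie_def .
  have "dim (lie_center br) \<le> 3"
    using dim_subset[OF pure] assms(7) by simp
  moreover have "dim (lie_center br) \<noteq> 0"
    using dim_center_pos_if_solvable assms(5,7,8) by blast
  moreover have "dim (lie_center br) \<noteq> 2" "dim (lie_center br) \<noteq> 3"
    using nilpotent_if_dim_center_2 nilpotent_if_dim_center_3 pure assms(4,7,8) by blast+
  ultimately have "dim (lie_center br) = 1"
    by linarith
  with heisenberg_if_dim_center_1 pure assms(7,8) show ?thesis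
    by blast
qed

end
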